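(* Let $\langle [n],\{v_a\}_{a\in[n]}\rangle$ be a cake-division instance, let $\alpha\ge1$, and let $\mathcal{I}$ be an $\alpha$-approximately envy-free allocation. Then for every $\rho\in(0,1]$ and every allocation $\mathcal{I}^*$, $$\mathrm{M}_\rho(\mathcal{I}^* )\ \le\ 2\alpha\,2^{1/\rho}\,n^{\frac{\rho}{\rho+1}}\ \mathrm{M}_\rho(\mathcal{I}).$$
   Context: The cake is $[0,1]$. Each agent's valuation $v_a$ assigns a value $v_a(I)\ge0$ to every interval $I\subseteq[0,1]$ and is normalized ($v_a([0,1])=1$), divisible (for every interval $[x,y]$ and $\lambda\in[0,1]$ there is $z\in[x,y]$ with $v_a([x,z])=\lambda v_a([x,y])$), and sigma additive ($v_a(I\cup J)=v_a(I)+v_a(J)$ for disjoint intervals). Intervals meeting only at an endpoint are regarded as disjoint. An allocation is a tuple $\mathcal{I}=\{I_1,\dots,I_n\}$ of pairwise-disjoint (possibly empty) intervals with $\bigcup_aI_a=[0,1]$, $I_a$ going to agent $a$. For $\alpha\ge1$, $\mathcal{I}$ is $\alpha$-approximately envy-free if $v_a(I_a)\ge\frac1\alpha v_a(I_b)$ for all $a,b$. The $\rho$-mean welfare is $\mathrm{M}_\rho(\mathcal{I})=\left(\frac1n\sum_{a=1}^n[v_a(I_a)]^\rho\right)^{1/\rho}$. *)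

theory Defs
  imports "HOL-Analysis.Analysis"
begin

definition cake_interval :: "real set \<Rightarrow> bool" where
  "cake_interval I \<longleftrightarrow> is_interval I \<and> I \<subseteq> {0..1}"

text \<open>Intervals meeting only at an endpoint are regarded as disjoint:
two intervals are disjoint iff they share at most one point.\<close>
definition idisjoint :: "real set \<Rightarrow> real set \<Rightarrow> bool" where
  "idisjoint I J \<longleftrightarrow> (\<exists>p. I \<inter> J \<subseteq> {p})"

definition valuation :: "(real set \<Rightarrow> real) \<Rightarrow> bool" where
  "valuation v \<longleftrightarrow>
     (\<forall>I. cake_interval I \<longrightarrow> v I \<ge> 0) \<and>
     v {0..1} = 1 \<and>
     (\<forall>x y lam. 0 \<le> x \<and> x \<le> y \<and> y \<le> 1 \<and> 0 \<le> lam \<and> lam \<le> 1 \<longrightarrow>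
        (\<exists>z\<in>{x..y}. v {x..z} = lam * v {x..y})) \<and>
     (\<forall>I J. cake_interval I \<and> cake_interval J \<and> cake_interval (I \<union> J) \<and> idisjoint I J
        \<longrightarrow> v (I \<union> J) = v I + v J)"

definition allocation :: "nat \<Rightarrow> (nat \<Rightarrow> real set) \<Rightarrow> bool" where
  "allocation n I \<longleftrightarrow>
     (\<forall>a<n. cake_interval (I a)) \<and>
     (\<forall>a<n. \<forall>b<n. a \<noteq> b \<longrightarrow> idisjoint (I a) (I b)) \<and>
     (\<Union>a<n. I a) = {0..1}"

definition approx_envy_free ::
    "nat \<Rightarrow> (nat \<Rightarrow> real set \<Rightarrow> real) \<Rightarrow> real \<Rightarrow> (nat \<Rightarrow> real set) \<Rightarrow> bool" where
  "approx_envy_free n v \<alpha> I \<longleftrightarrow> (\<forall>a<n. \<forall>b<n. v a (I a) \<ge> (1 / \<alpha>) * v a (I b))"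

definition rho_mean ::
    "nat \<Rightarrow> (nat \<Rightarrow> real set \<Rightarrow> real) \<Rightarrow> real \<Rightarrow> (nat \<Rightarrow> real set) \<Rightarrow> real" where
  "rho_mean n v \<rho> I = ((1 / real n) * (\<Sum>a<n. (v a (I a)) powr \<rho>)) powr (1 / \<rho>)"

end

theory Submission
  imports Defs
begin

text \<open>Approximate envy-freeness of \<open>I\<close> gives each agent \<open>a\<close> a share \<open>x\<^sub>a \<ge> 1/(\<alpha> n)\<close>, and bounds
  her value \<open>y\<^sub>a\<close> of any interval by \<open>\<alpha> k x\<^sub>a\<close>, where \<open>k\<close> is the number of pieces of \<open>I\<close> the interval
  overlaps. The pieces of two allocations overlap in at most \<open>2n\<close> pairs, so with
  \<open>m = n\<^bsup>\<rho>/(\<rho>+1)\<^esup>\<close> at most \<open>n/m\<close> pieces of \<open>I*\<close> overlap more than \<open>2m\<close> pieces of \<open>I\<close>. Those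
  agents contribute at most \<open>n/m \<le> (\<alpha> m)\<^sup>\<rho> \<Sum> x\<^sub>a\<^sup>\<rho>\<close> to \<open>\<Sum> y\<^sub>a\<^sup>\<rho>\<close>, and every other agent
  has \<open>y\<^sub>a \<le> 2\<alpha>m x\<^sub>a\<close>.\<close>

section \<open>Valuations of intervals\<close>

lemma valuation_nonneg: "valuation v \<Longrightarrow> cake_interval J \<Longrightarrow> 0 \<le> v J"
  unfolding valuation_def by (elim conjE) simp

lemma valuation_Un:
  "valuation v \<Longrightarrow> cake_interval I \<Longrightarrow> cake_interval J \<Longrightarrow> cake_interval (I \<union> J)
    \<Longrightarrow> idisjoint I J \<Longrightarrow> v (I \<union> J) = v I + v J"
  unfolding valuation_def by (elim conjE) simp

lemma valuation_insert:
  assumes v: "valuation v" and J: "cake_interval J" and pJ: "cake_interval (insert p J)"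
  shows "v (insert p J) = v J"
proof -
  have p: "cake_interval {p}" using pJ by (simp add: cake_interval_def is_interval_1)
  have "v ({p} \<union> {p}) = v {p} + v {p}"
    using valuation_Un[OF v p p] p by (simp add: idisjoint_def)
  then have "v {p} = 0" by simp
  moreover have "v (J \<union> {p}) = v J + v {p}"
    using valuation_Un[OF v J p] pJ by (simp add: idisjoint_def Int_insert_right)
  ultimately show ?thesis by simp
qed

lemma valuation_empty: "valuation v \<Longrightarrow> v {} = 0"
  using valuation_Un[of v "{}" "{}"] by (simp add: cake_interval_def idisjoint_def)

lemma is_interval_between:
  fixes S :: "real set"
  assumes "{l<..<r} \<subseteq> S" "S \<subseteq> {l..r}"
  shows "is_interval S"
  unfolding is_interval_1
proof (intro ballI allI impI)
  fix a b x assume ab: "a \<in> S" "b \<in> S" and x: "a \<le> x \<and> x \<le> b"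
  show "x \<in> S"
  proof (cases "x = a \<or> x = b")
    case False
    with x have "a < x" "x < b" by auto
    moreover have "l \<le> a" "b \<le> r" using ab assms(2) by auto
    ultimately show ?thesis using assms(1) by auto
  qed (use ab in auto)
qed

lemma cake_interval_bdd_below: "cake_interval J \<Longrightarrow> bdd_below J"
  unfolding cake_interval_def by (meson atLeastAtMost_iff bdd_belowI subsetD)

lemma cake_interval_Int: "cake_interval A \<Longrightarrow> cake_interval B \<Longrightarrow> cake_interval (A \<inter> B)"
  unfolding cake_interval_def by (auto simp: is_interval_Int)

definition left_end :: "real set \<Rightarrow> real" where
  "left_end J = (if J = {} then 0 else Inf J)"

definition right_end :: "real set \<Rightarrow> real" where
  "right_end J = (if J = {} then 0 else Sup J)"

lemma cake_interval_ends:
  assumes "cake_interval J"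
  shows "0 \<le> left_end J" "left_end J \<le> right_end J" "right_end J \<le> 1"
    and "J \<subseteq> {left_end J..right_end J}" "{left_end J<..<right_end J} \<subseteq> J"
proof -
  have sub: "J \<subseteq> {0..1}" and iv: "is_interval J" using assms by (auto simp: cake_interval_def)
  have bdd: "bdd_below J" "bdd_above J"
    using cake_interval_bdd_below[OF assms] sub by (meson atLeastAtMost_iff bdd_aboveI subsetD)+
  have "(0 \<le> left_end J \<and> left_end J \<le> right_end J \<and> right_end J \<le> 1)
        \<and> J \<subseteq> {left_end J..right_end J} \<and> {left_end J<..<right_end J} \<subseteq> J"
  proof (cases "J = {}")
    case False
    then obtain x where "x \<in> J" by blast
    have "{Inf J<..<Sup J} \<subseteq> J"
    proof
      fix t assume "t \<in> {Inf J<..<Sup J}"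
      then obtain a b where "a \<in> J" "a < t" "b \<in> J" "t < b"
        using cInf_less_iff[OF False bdd(1)] less_cSup_iff[OF False bdd(2)] by auto
      then show "t \<in> J" using iv unfolding is_interval_1 by (meson less_le)
    qed
    moreover have "J \<subseteq> {Inf J..Sup J}" using bdd by (auto intro: cInf_lower cSup_upper)
    moreover have "0 \<le> Inf J" "Sup J \<le> 1"
      using sub False by (intro cInf_greatest cSup_least; auto)+
    ultimately show ?thesis using False \<open>x \<in> J\<close> by (auto simp: left_end_def right_end_def)
  qed (simp add: left_end_def right_end_def)
  then show "0 \<le> left_end J" "left_end J \<le> right_end J" "right_end J \<le> 1"
    and "J \<subseteq> {left_end J..right_end J}" "{left_end J<..<right_end J} \<subseteq> J"
    by blast+
qed

lemma valuation_eq_Icc_ends: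
  assumes v: "valuation v" and J: "cake_interval J" and ne: "J \<noteq> {}"
  shows "v J = v {left_end J..right_end J}"
proof -
  define l r where "l = left_end J" and "r = right_end J"
  note ends = cake_interval_ends[OF J, folded l_def r_def]
  have between: "cake_interval S" if "J \<subseteq> S" "S \<subseteq> {l..r}" for S
    using that ends is_interval_between[of l r S] by (auto simp: cake_interval_def)
  have "insert r (insert l J) = {l..r}"
  proof
    show "{l..r} \<subseteq> insert r (insert l J)"
      using ends(5) by (auto simp: subset_iff less_le)
  qed (use ends(1-4) in auto)
  moreover have "v (insert r (insert l J)) = v (insert l J)"
    using ends by (intro valuation_insert[OF v] between) auto
  moreover have "v (insert l J) = v J"
    using ends by (intro valuation_insert[OF v J] between) auto
  ultimately show ?thesis by (simp add: l_def r_def)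
qed

text \<open>Clamped to \<open>[0,1]\<close> so that it is monotone on the whole real line.\<close>
definition cake_cdf :: "(real set \<Rightarrow> real) \<Rightarrow> real \<Rightarrow> real" where
  "cake_cdf v x = v {0..max 0 (min 1 x)}"

lemma valuation_Icc_eq_cdf_diff:
  assumes v: "valuation v" and xy: "0 \<le> x" "x \<le> y" "y \<le> 1"
  shows "v {x..y} = cake_cdf v y - cake_cdf v x"
proof -
  have "idisjoint {0..x} {x..y}" unfolding idisjoint_def by (rule exI[of _ x]) auto
  moreover have "{0..x} \<union> {x..y} = {0..y}" using xy by auto
  ultimately have "v {0..y} = v {0..x} + v {x..y}"
    using valuation_Un[OF v, of "{0..x}" "{x..y}"] xy by (simp add: cake_interval_def)
  then show ?thesis using xy by (simp add: cake_cdf_def)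
qed

lemma mono_cake_cdf:
  assumes v: "valuation v" shows "mono (cake_cdf v)"
proof
  fix x y :: real assume "x \<le> y"
  define x' y' where "x' = max 0 (min 1 x)" and "y' = max 0 (min 1 y)"
  have xy': "0 \<le> x'" "x' \<le> y'" "y' \<le> 1" using \<open>x \<le> y\<close> by (auto simp: x'_def y'_def)
  have "cake_cdf v x = cake_cdf v x'" "cake_cdf v y = cake_cdf v y'"
    by (simp_all add: cake_cdf_def x'_def y'_def)
  moreover have "0 \<le> v {x'..y'}"
    using valuation_nonneg[OF v] xy' by (simp add: cake_interval_def)
  ultimately show "cake_cdf v x \<le> cake_cdf v y"
    using valuation_Icc_eq_cdf_diff[OF v xy'] by simp
qed

lemma cake_cdf_0: "valuation v \<Longrightarrow> cake_cdf v 0 = 0"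
  using valuation_Icc_eq_cdf_diff[of v 0 0] by (simp add: cake_cdf_def)

lemma cake_cdf_le_1:
  assumes v: "valuation v" shows "cake_cdf v x \<le> 1"
proof -
  have "cake_cdf v x \<le> cake_cdf v (max 1 x)" using mono_cake_cdf[OF v] by (simp add: monoD)
  also have "\<dots> = 1" using v by (simp add: cake_cdf_def valuation_def)
  finally show ?thesis .
qed

lemma valuation_eq_cdf_diff:
  assumes v: "valuation v" and J: "cake_interval J"
  shows "v J = cake_cdf v (right_end J) - cake_cdf v (left_end J)"
proof (cases "J = {}")
  case True
  then show ?thesis using valuation_empty[OF v] by (simp add: left_end_def right_end_def)
next
  case False
  then show ?thesis
    using valuation_eq_Icc_ends[OF v J] valuation_Icc_eq_cdf_diff[OF v] cake_interval_ends[OF J]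
    by simp
qed

lemma valuation_le_1:
  assumes v: "valuation v" and J: "cake_interval J" shows "v J \<le> 1"
proof -
  have "cake_cdf v 0 \<le> cake_cdf v (left_end J)"
    using mono_cake_cdf[OF v] cake_interval_ends(1)[OF J] by (simp add: monoD)
  then show ?thesis
    using valuation_eq_cdf_diff[OF v J] cake_cdf_0[OF v] cake_cdf_le_1[OF v, of "right_end J"] by simp
qed

lemma exists_between_notin_finite:
  fixes p q :: real assumes "p < q" "finite E"
  obtains t where "p < t" "t < q" "t \<notin> E"
proof -
  have "infinite ({p<..<q} - E)" using assms by (simp add: Diff_infinite_finite)
  then obtain t where "t \<in> {p<..<q} - E" by (metis ex_in_conv finite.emptyI)
  then show ?thesis using that by auto
qed

text \<open>The cover interval with the rightmost end reaches \<open>q\<close>, and the others cover what lies to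
  its left.\<close>
lemma mono_diff_le_sum_of_cover:
  fixes F :: "real \<Rightarrow> real"
  assumes F: "mono F" and K: "finite K" and E: "finite E"
    and LR: "\<And>b. b \<in> K \<Longrightarrow> L b \<le> R b"
    and cover: "\<And>t. p < t \<Longrightarrow> t < q \<Longrightarrow> t \<notin> E \<Longrightarrow> \<exists>b\<in>K. L b \<le> t \<and> t \<le> R b"
  shows "F q - F p \<le> (\<Sum>b\<in>K. F (R b) - F (L b))"
  using K LR cover
proof (induction K arbitrary: q rule: finite_remove_induct)
  case empty
  have "\<not> p < q" using exists_between_notin_finite[OF _ E] empty.prems by blast
  then show ?case using F by (simp add: monoD)
next
  case (remove K)
  have nonneg: "0 \<le> F (R b) - F (L b)" if "b \<in> K" for b
    using remove.prems(1)[OF that] F by (simp add: monoD)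
  have "Max (R ` K) \<in> R ` K" using remove.hyps(1,2) by simp
  then obtain b0 where b0: "b0 \<in> K" "R b0 = Max (R ` K)" by (metis imageE)
  have R_le: "R b \<le> R b0" if "b \<in> K" for b
    using b0(2) remove.hyps(1) that by simp
  have sum_K: "(\<Sum>b\<in>K. F (R b) - F (L b)) = (F (R b0) - F (L b0)) + (\<Sum>b\<in>K - {b0}. F (R b) - F (L b))"
    using b0(1) remove.hyps(1) by (simp add: sum.remove)
  show ?case
  proof (cases "p < q")
    case False
    moreover have "0 \<le> (\<Sum>b\<in>K. F (R b) - F (L b))" by (rule sum_nonneg) (rule nonneg)
    moreover have "F q \<le> F p" using False F by (simp add: monoD)
    ultimately show ?thesis by linarith
  next
    case True
    have q_R: "q \<le> R b0"
    proof (rule ccontr)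
      assume "\<not> q \<le> R b0"
      then obtain t where t: "max p (R b0) < t" "t < q" "t \<notin> E"
        using exists_between_notin_finite[OF _ E, of "max p (R b0)" q] True by auto
      then obtain b where "b \<in> K" "t \<le> R b" using remove.prems(2) by force
      then show False using R_le t(1) by fastforce
    qed
    define c where "c = min q (L b0)"
    have "F c - F p \<le> (\<Sum>b\<in>K - {b0}. F (R b) - F (L b))"
    proof (rule remove.IH[OF b0(1)])
      fix t assume "p < t" "t < c" "t \<notin> E"
      then obtain b where "b \<in> K" "L b \<le> t" "t \<le> R b" using remove.prems(2) c_def by auto
      moreover have "b \<noteq> b0" using \<open>t < c\<close> \<open>L b \<le> t\<close> c_def by auto
      ultimately show "\<exists>b\<in>K - {b0}. L b \<le> t \<and> t \<le> R b" by blast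
    qed (use remove.prems(1) in auto)
    moreover have "F q - F c \<le> F (R b0) - F (L b0)"
    proof (cases "q \<le> L b0")
      case True
      then show ?thesis using nonneg[OF b0(1)] by (simp add: c_def)
    next
      case False
      then show ?thesis using F q_R by (simp add: c_def monoD)
    qed
    ultimately show ?thesis using sum_K by linarith
  qed
qed

lemma valuation_le_sum_overlapping:
  assumes v: "valuation v" and I: "allocation n I" and J: "cake_interval J"
  shows "v J \<le> (\<Sum>b\<in>{b\<in>{..<n}. \<not> idisjoint (I b) J}. v (I b))"
proof -
  define K where "K = {b\<in>{..<n}. \<not> idisjoint (I b) J}"
  define E where "E = (\<Union>b\<in>{..<n} - K. I b \<inter> J)"
  have I_ci: "cake_interval (I b)" if "b < n" for b using I that by (simp add: allocation_def)
  have "finite E" unfolding E_def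
  proof (intro finite_UN_I)
    fix b assume "b \<in> {..<n} - K"
    then obtain p where "I b \<inter> J \<subseteq> {p}" by (auto simp: K_def idisjoint_def)
    then show "finite (I b \<inter> J)" using finite_subset by blast
  qed simp
  have "cake_cdf v (right_end J) - cake_cdf v (left_end J)
      \<le> (\<Sum>b\<in>K. cake_cdf v (right_end (I b)) - cake_cdf v (left_end (I b)))"
  proof (rule mono_diff_le_sum_of_cover[OF mono_cake_cdf[OF v] _ \<open>finite E\<close>])
    fix t assume t: "left_end J < t" "t < right_end J" "t \<notin> E"
    then have "t \<in> J" using cake_interval_ends(5)[OF J] by auto
    then have "t \<in> (\<Union>b<n. I b)" using I J by (auto simp: allocation_def cake_interval_def)
    then obtain b where "b < n" "t \<in> I b" by blast
    moreover have "b \<in> K"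
    proof (rule ccontr)
      assume "b \<notin> K"
      then have "t \<in> E" using \<open>b < n\<close> \<open>t \<in> I b\<close> \<open>t \<in> J\<close> by (auto simp: E_def)
      then show False using t(3) by contradiction
    qed
    ultimately show "\<exists>b\<in>K. left_end (I b) \<le> t \<and> t \<le> right_end (I b)"
      using cake_interval_ends(4)[OF I_ci[of b]] by (intro bexI[of _ b]) auto
  next
    fix b assume "b \<in> K"
    then show "left_end (I b) \<le> right_end (I b)" using cake_interval_ends(2)[OF I_ci] by (simp add: K_def)
  qed (simp add: K_def)
  also have "\<dots> = (\<Sum>b\<in>K. v (I b))"
    using valuation_eq_cdf_diff[OF v I_ci] by (simp add: K_def)
  finally show ?thesis using valuation_eq_cdf_diff[OF v J] by (simp add: K_def)
qed

lemma one_le_sum_valuation_allocation: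
  assumes v: "valuation v" and I: "allocation n I"
  shows "1 \<le> (\<Sum>b<n. v (I b))"
proof -
  have I_ci: "cake_interval (I b)" if "b < n" for b using I that by (simp add: allocation_def)
  have "1 = v {0..1}" using v by (simp add: valuation_def)
  also have "\<dots> \<le> (\<Sum>b\<in>{b\<in>{..<n}. \<not> idisjoint (I b) {0..1}}. v (I b))"
    by (rule valuation_le_sum_overlapping[OF v I]) (simp add: cake_interval_def)
  also have "\<dots> \<le> (\<Sum>b<n. v (I b))"
    using valuation_nonneg[OF v I_ci] by (intro sum_mono2) auto
  finally show ?thesis .
qed

section \<open>Overlaps between two allocations\<close>

lemma mem_interval_above_Inf:
  fixes S :: "real set"
  assumes "is_interval S" "bdd_below S" "q \<in> S" "Inf S < t" "t \<le> q"
  shows "t \<in> S"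
proof -
  obtain a where "a \<in> S" "a < t" using cInf_less_iff[OF _ assms(2)] assms(3,4) by blast
  then show ?thesis using assms(1,3,5) unfolding is_interval_1 by (meson less_le)
qed

lemma Inf_Int_intervals:
  fixes A B :: "real set"
  assumes A: "is_interval A" "bdd_below A" and B: "is_interval B" "bdd_below B" and AB: "A \<inter> B \<noteq> {}"
  shows "Inf (A \<inter> B) = max (Inf A) (Inf B)"
proof (rule antisym)
  show "max (Inf A) (Inf B) \<le> Inf (A \<inter> B)"
    using AB A(2) B(2) by (auto intro: cInf_superset_mono)
  show "Inf (A \<inter> B) \<le> max (Inf A) (Inf B)"
  proof (rule ccontr)
    assume less: "\<not> ?thesis"
    obtain q where q: "q \<in> A \<inter> B" using AB by blast
    have bdd: "bdd_below (A \<inter> B)" using A(2) by (meson bdd_below_mono inf_le1)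
    define t where "t = (max (Inf A) (Inf B) + Inf (A \<inter> B)) / 2"
    have t: "max (Inf A) (Inf B) < t" "t < Inf (A \<inter> B)" using less by (auto simp: t_def)
    moreover have "Inf (A \<inter> B) \<le> q" using q bdd by (rule cInf_lower)
    ultimately have "t \<in> A \<inter> B"
      using mem_interval_above_Inf[OF A, of q t] mem_interval_above_Inf[OF B, of q t] q by auto
    then show False using cInf_lower[OF _ bdd, of t] t(2) by simp
  qed
qed

text \<open>Two intervals overlapping \<open>C\<close> from the same left end share a whole interval to its right.\<close>
lemma overlap_of_common_Inf:
  assumes A: "cake_interval A" and B: "cake_interval B" and C: "cake_interval C"
    and AC: "\<not> idisjoint A C" and BC: "\<not> idisjoint B C"
    and eq: "Inf (A \<inter> C) = Inf (B \<inter> C)"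
  shows "\<not> idisjoint A B"
proof -
  have point_above: "\<exists>q\<in>S \<inter> C. Inf (S \<inter> C) < q"
    if S: "cake_interval S" and SC: "\<not> idisjoint S C" for S
  proof -
    obtain x y where xy: "x \<in> S \<inter> C" "y \<in> S \<inter> C" "x \<noteq> y"
      using SC unfolding idisjoint_def by blast
    have "bdd_below (S \<inter> C)" using cake_interval_bdd_below[OF cake_interval_Int[OF S C]] .
    then have "Inf (S \<inter> C) \<le> x" "Inf (S \<inter> C) \<le> y" using xy by (auto intro: cInf_lower)
    then show ?thesis using xy by (metis less_le)
  qed
  have mem: "t \<in> S \<inter> C"
    if S: "cake_interval S" and "q \<in> S \<inter> C" "Inf (S \<inter> C) < t" "t \<le> q" for S q t
  proof (rule mem_interval_above_Inf[of _ q])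
    have "cake_interval (S \<inter> C)" by (rule cake_interval_Int[OF S C])
    then show "is_interval (S \<inter> C)" "bdd_below (S \<inter> C)"
      by (simp_all add: cake_interval_def cake_interval_bdd_below)
  qed (use that in auto)
  define c where "c = Inf (A \<inter> C)"
  obtain qa qb where "qa \<in> A \<inter> C" "c < qa" "qb \<in> B \<inter> C" "c < qb"
    using point_above[OF A AC] point_above[OF B BC] eq by (auto simp: c_def)
  moreover define d where "d = min qa qb"
  ultimately have "t \<in> A \<inter> B" if "c < t" "t \<le> d" for t
    using mem[OF A, of qa t] mem[OF B, of qb t] that eq by (auto simp: c_def)
  moreover have "c < (c + d) / 2" "(c + d) / 2 < d" using \<open>c < qa\<close> \<open>c < qb\<close> by (auto simp: d_def)
  ultimately have "(c + d) / 2 \<in> A \<inter> B" "d \<in> A \<inter> B" by auto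
  with \<open>(c + d) / 2 < d\<close> show ?thesis unfolding idisjoint_def by (metis less_irrefl singletonD subsetD)
qed

text \<open>Charge each overlapping pair to the piece whose left end is the left end of the overlap;
  by the previous lemma every piece is charged at most once.\<close>
lemma sum_card_overlapping_le:
  assumes A: "finite A" and B: "finite B"
    and I: "\<And>b. b \<in> B \<Longrightarrow> cake_interval (I b)" and J: "\<And>a. a \<in> A \<Longrightarrow> cake_interval (J a)"
    and I_disj: "\<And>b b'. b \<in> B \<Longrightarrow> b' \<in> B \<Longrightarrow> b \<noteq> b' \<Longrightarrow> idisjoint (I b) (I b')"
    and J_disj: "\<And>a a'. a \<in> A \<Longrightarrow> a' \<in> A \<Longrightarrow> a \<noteq> a' \<Longrightarrow> idisjoint (J a) (J a')"
  shows "(\<Sum>a\<in>A. card {b\<in>B. \<not> idisjoint (I b) (J a)}) \<le> card A + card B"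
proof -
  define P where "P = (SIGMA a:A. {b\<in>B. \<not> idisjoint (I b) (J a)})"
  define P\<^sub>J where "P\<^sub>J = {(a, b)\<in>P. Inf (I b \<inter> J a) = Inf (J a)}"
  define P\<^sub>I where "P\<^sub>I = {(a, b)\<in>P. Inf (J a \<inter> I b) = Inf (I b)}"
  have "P \<subseteq> P\<^sub>J \<union> P\<^sub>I"
  proof
    fix p assume "p \<in> P"
    then obtain a b where p: "p = (a, b)" and ab: "(a, b) \<in> P" by (cases p) auto
    then have "a \<in> A" "b \<in> B" "I b \<inter> J a \<noteq> {}" by (auto simp: P_def idisjoint_def)
    then have "Inf (I b \<inter> J a) = max (Inf (I b)) (Inf (J a))"
      using I J by (intro Inf_Int_intervals) (auto simp: cake_interval_def cake_interval_bdd_below)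
    then show "p \<in> P\<^sub>J \<union> P\<^sub>I" using ab p by (auto simp: P\<^sub>J_def P\<^sub>I_def Int_commute max_def)
  qed
  have "inj_on fst P\<^sub>J"
  proof (rule inj_onI)
    fix p p' assume "p \<in> P\<^sub>J" "p' \<in> P\<^sub>J" "fst p = fst p'"
    moreover obtain a b b' where pp': "p = (a, b)" "p' = (a, b')" by (metis \<open>fst p = fst p'\<close> prod.collapse)
    ultimately have "a \<in> A" "b \<in> B" "b' \<in> B" "\<not> idisjoint (I b) (J a)" "\<not> idisjoint (I b') (J a)"
      "Inf (I b \<inter> J a) = Inf (I b' \<inter> J a)"
      by (auto simp: P\<^sub>J_def P_def)
    then have "\<not> idisjoint (I b) (I b')" using overlap_of_common_Inf[OF I I J] by blast
    then show "p = p'" using I_disj \<open>b \<in> B\<close> \<open>b' \<in> B\<close> pp' by blast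
  qed
  moreover have "inj_on snd P\<^sub>I"
  proof (rule inj_onI)
    fix p p' assume "p \<in> P\<^sub>I" "p' \<in> P\<^sub>I" "snd p = snd p'"
    moreover obtain a a' b where pp': "p = (a, b)" "p' = (a', b)" by (metis \<open>snd p = snd p'\<close> prod.collapse)
    ultimately have "b \<in> B" "a \<in> A" "a' \<in> A" "\<not> idisjoint (J a) (I b)" "\<not> idisjoint (J a') (I b)"
      "Inf (J a \<inter> I b) = Inf (J a' \<inter> I b)"
      by (auto simp: P\<^sub>I_def P_def idisjoint_def Int_commute)
    then have "\<not> idisjoint (J a) (J a')" using overlap_of_common_Inf[OF J J I] by blast
    then show "p = p'" using J_disj \<open>a \<in> A\<close> \<open>a' \<in> A\<close> pp' by blast
  qed
  moreover have "fst ` P\<^sub>J \<subseteq> A" "snd ` P\<^sub>I \<subseteq> B" by (auto simp: P\<^sub>J_def P\<^sub>I_def P_def)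
  ultimately have "card P\<^sub>J \<le> card A" "card P\<^sub>I \<le> card B"
    using card_inj_on_le A B by blast+
  have "(\<Sum>a\<in>A. card {b\<in>B. \<not> idisjoint (I b) (J a)}) = card P"
    using A B by (simp add: P_def)
  also have "\<dots> \<le> card (P\<^sub>J \<union> P\<^sub>I)"
  proof (rule card_mono[OF _ \<open>P \<subseteq> P\<^sub>J \<union> P\<^sub>I\<close>])
    have "finite P" using A B by (simp add: P_def)
    moreover have "P\<^sub>J \<union> P\<^sub>I \<subseteq> P" by (auto simp: P\<^sub>J_def P\<^sub>I_def)
    ultimately show "finite (P\<^sub>J \<union> P\<^sub>I)" using finite_subset by blast
  qed
  also have "\<dots> \<le> card A + card B"
    using card_Un_le[of P\<^sub>J P\<^sub>I] \<open>card P\<^sub>J \<le> card A\<close> \<open>card P\<^sub>I \<le> card B\<close> by linarith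
  finally show ?thesis .
qed

section \<open>Approximately envy-free allocations and power means\<close>

lemma approx_envy_free_le:
  assumes "approx_envy_free n v \<alpha> I" "0 < \<alpha>" "a < n" "b < n"
  shows "v a (I b) \<le> \<alpha> * v a (I a)"
  using assms by (auto simp: approx_envy_free_def field_simps)

lemma approx_envy_free_proportional:
  assumes v: "valuation (v a)" and I: "allocation n I" and ef: "approx_envy_free n v \<alpha> I"
    and \<alpha>: "0 < \<alpha>" and a: "a < n"
  shows "1 \<le> \<alpha> * real n * v a (I a)"
proof -
  have "1 \<le> (\<Sum>b<n. v a (I b))" by (rule one_le_sum_valuation_allocation[OF v I])
  also have "\<dots> \<le> (\<Sum>b<n. \<alpha> * v a (I a))"
    using approx_envy_free_le[OF ef \<alpha> a] by (intro sum_mono) auto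
  finally show ?thesis by (simp add: mult_ac)
qed

lemma approx_envy_free_le_card_overlapping:
  assumes v: "valuation (v a)" and I: "allocation n I" and ef: "approx_envy_free n v \<alpha> I"
    and \<alpha>: "0 < \<alpha>" and a: "a < n" and J: "cake_interval J"
  shows "v a J \<le> \<alpha> * real (card {b\<in>{..<n}. \<not> idisjoint (I b) J}) * v a (I a)"
proof -
  have "v a J \<le> (\<Sum>b\<in>{b\<in>{..<n}. \<not> idisjoint (I b) J}. v a (I b))"
    by (rule valuation_le_sum_overlapping[OF v I J])
  also have "\<dots> \<le> (\<Sum>b\<in>{b\<in>{..<n}. \<not> idisjoint (I b) J}. \<alpha> * v a (I a))"
    using approx_envy_free_le[OF ef \<alpha> a] by (intro sum_mono) auto
  finally show ?thesis by (simp add: mult_ac)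
qed

lemma card_above_threshold_le:
  fixes f :: "'a \<Rightarrow> real"
  assumes "finite A" "\<And>a. a \<in> A \<Longrightarrow> 0 \<le> f a" "0 < T"
  shows "real (card {a\<in>A. T < f a}) \<le> (\<Sum>a\<in>A. f a) / T"
proof -
  have "real (card {a\<in>A. T < f a}) * T = (\<Sum>a\<in>{a\<in>A. T < f a}. T)" by simp
  also have "\<dots> \<le> (\<Sum>a\<in>{a\<in>A. T < f a}. f a)" by (intro sum_mono) auto
  also have "\<dots> \<le> (\<Sum>a\<in>A. f a)" using assms(1,2) by (intro sum_mono2) auto
  finally show ?thesis using assms(3) by (simp add: field_simps)
qed

text \<open>The exponent of \<open>m\<close> is chosen so that the bound \<open>n/m\<close> on the agents with many overlaps
  matches the proportionality bound \<open>(\<alpha> m)\<^sup>\<rho> n (\<alpha> n)\<^sup>-\<^sup>\<rho>\<close>.\<close>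
lemma threshold_balance_identity:
  fixes n \<alpha> \<rho> :: real
  assumes n: "0 < n" and \<alpha>: "0 < \<alpha>" and \<rho>: "0 < \<rho>"
  defines "m \<equiv> n powr (\<rho> / (\<rho> + 1))"
  shows "n / m = (\<alpha> * m) powr \<rho> * (n * (1 / (\<alpha> * n)) powr \<rho>)"
proof -
  have "m * m powr \<rho> = m powr (1 + \<rho>)" using n by (simp add: m_def powr_add)
  also have "\<dots> = n powr (\<rho> / (\<rho> + 1) * (1 + \<rho>))" by (simp add: m_def powr_powr)
  also have "\<rho> / (\<rho> + 1) * (1 + \<rho>) = \<rho>" using \<rho> by (simp add: field_simps)
  finally have key: "m * m powr \<rho> = n powr \<rho>" .
  have "(\<alpha> * m) powr \<rho> * (n * (1 / (\<alpha> * n)) powr \<rho>) = m powr \<rho> * n / n powr \<rho>"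
    using \<alpha> n by (simp add: m_def powr_divide powr_mult field_simps)
  also have "\<dots> = n / m" using key n by (simp add: m_def field_simps)
  finally show ?thesis by simp
qed

lemma sum_powr_le_of_overlap_counts:
  fixes x y :: "nat \<Rightarrow> real" and k :: "nat \<Rightarrow> nat"
  assumes n: "1 \<le> n" and \<alpha>: "0 < \<alpha>" and \<rho>: "0 < \<rho>"
    and x: "\<And>a. a < n \<Longrightarrow> 1 \<le> \<alpha> * real n * x a"
    and y: "\<And>a. a < n \<Longrightarrow> 0 \<le> y a" "\<And>a. a < n \<Longrightarrow> y a \<le> 1"
    and yx: "\<And>a. a < n \<Longrightarrow> y a \<le> \<alpha> * real (k a) * x a"
    and k: "(\<Sum>a<n. k a) \<le> 2 * n"
  shows "(\<Sum>a<n. y a powr \<rho>) \<le> 2 * (2 * \<alpha> * real n powr (\<rho> / (\<rho> + 1))) powr \<rho> * (\<Sum>a<n. x a powr \<rho>)"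
proof -
  define m where "m = real n powr (\<rho> / (\<rho> + 1))"
  define H where "H = {a\<in>{..<n}. 2 * m < real (k a)}"
  define X where "X = (\<Sum>a<n. x a powr \<rho>)"
  have m: "1 \<le> m" using n \<rho> by (simp add: m_def ge_one_powr_ge_zero)
  have x_lower: "1 / (\<alpha> * real n) \<le> x a" if "a < n" for a
    using x[OF that] \<alpha> n by (simp add: field_simps)
  have x_pos: "0 < x a" if "a < n" for a
    using zero_less_mult_pos[of "\<alpha> * real n" "x a"] x[OF that] \<alpha> n by simp
  have pointwise: "y a powr \<rho> \<le> (if a \<in> H then 1 else 0) + (2 * \<alpha> * m) powr \<rho> * x a powr \<rho>"
    if a: "a < n" for a
  proof (cases "a \<in> H")
    case True
    have "y a powr \<rho> \<le> 1" using y[OF a] \<rho> by (intro powr_le1) auto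
    then show ?thesis using True by (simp add: add_increasing2)
  next
    case False
    then have "real (k a) \<le> 2 * m" using a by (simp add: H_def)
    then have "\<alpha> * real (k a) * x a \<le> \<alpha> * (2 * m) * x a"
      using \<alpha> x_pos[OF a] by (intro mult_right_mono mult_left_mono) auto
    then have "y a \<le> 2 * \<alpha> * m * x a" using yx[OF a] by simp
    then have "y a powr \<rho> \<le> (2 * \<alpha> * m * x a) powr \<rho>" using y[OF a] \<rho> by (intro powr_mono2) auto
    then show ?thesis using False \<alpha> m x_pos[OF a] by (simp add: powr_mult)
  qed
  have "(\<Sum>a<n. y a powr \<rho>) \<le> (\<Sum>a<n. (if a \<in> H then 1 else 0) + (2 * \<alpha> * m) powr \<rho> * x a powr \<rho>)"
    using pointwise by (intro sum_mono) auto
  also have "\<dots> = real (card H) + (2 * \<alpha> * m) powr \<rho> * X"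
    by (simp add: sum.distrib sum_distrib_left X_def H_def sum.If_cases Int_def)
  also have "real (card H) \<le> (2 * \<alpha> * m) powr \<rho> * X"
  proof -
    have "real (card H) \<le> (\<Sum>a<n. real (k a)) / (2 * m)"
      unfolding H_def using m by (intro card_above_threshold_le) auto
    also have "\<dots> \<le> real n / m" using k m by (simp add: field_simps flip: of_nat_sum)
    also have "\<dots> = (\<alpha> * m) powr \<rho> * (real n * (1 / (\<alpha> * real n)) powr \<rho>)"
      using threshold_balance_identity[of "real n" \<alpha> \<rho>] n \<alpha> \<rho> by (simp add: m_def)
    also have "\<dots> \<le> (2 * \<alpha> * m) powr \<rho> * X"
    proof (rule mult_mono)
      show "(\<alpha> * m) powr \<rho> \<le> (2 * \<alpha> * m) powr \<rho>" using \<alpha> m \<rho> by (intro powr_mono2) auto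
      have "(\<Sum>a<n. (1 / (\<alpha> * real n)) powr \<rho>) \<le> X"
        unfolding X_def using x_lower \<alpha> n \<rho> by (intro sum_mono powr_mono2) auto
      then show "real n * (1 / (\<alpha> * real n)) powr \<rho> \<le> X" by simp
    qed (auto simp: X_def)
    finally show ?thesis .
  qed
  finally show ?thesis by (simp add: X_def m_def mult_ac)
qed

lemma powr_inverse_le_scaled:
  fixes s C X Y \<rho> :: real
  assumes "0 < \<rho>" "0 \<le> s" "0 \<le> C" "0 \<le> X" "0 \<le> Y" "Y \<le> C powr \<rho> * X"
  shows "(s * Y) powr (1 / \<rho>) \<le> C * (s * X) powr (1 / \<rho>)"
proof -
  have "s * Y \<le> C powr \<rho> * (s * X)"
    using mult_left_mono[OF assms(6,2)] by (simp add: mult.left_commute)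
  then have "(s * Y) powr (1 / \<rho>) \<le> (C powr \<rho> * (s * X)) powr (1 / \<rho>)"
    using assms by (intro powr_mono2) auto
  also have "\<dots> = C * (s * X) powr (1 / \<rho>)"
    using assms by (simp add: powr_mult powr_powr)
  finally show ?thesis .
qed

theorem theorem9:
  fixes n :: nat and v :: "nat \<Rightarrow> real set \<Rightarrow> real" and \<alpha> \<rho> :: real
    and I Istar :: "nat \<Rightarrow> real set"
  assumes "n \<ge> 1"
    and "\<forall>a<n. valuation (v a)"
    and "\<alpha> \<ge> 1"
    and "allocation n I"
    and "approx_envy_free n v \<alpha> I"
    and "0 < \<rho>" and "\<rho> \<le> 1"
    and "allocation n Istar"
  shows "rho_mean n v \<rho> Istar
           \<le> 2 * \<alpha> * 2 powr (1 / \<rho>) * real n powr (\<rho> / (\<rho> + 1)) * rho_mean n v \<rho> I"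
proof -
  note n = assms(1) and v = assms(2)[rule_format] and I = assms(4) and ef = assms(5)
    and \<rho> = assms(6) and Istar = assms(8)
  have \<alpha>: "0 < \<alpha>" using assms(3) by simp
  have Istar_ci: "cake_interval (Istar a)" if "a < n" for a using Istar that by (simp add: allocation_def)
  define m where "m = real n powr (\<rho> / (\<rho> + 1))"
  define k where "k a = card {b\<in>{..<n}. \<not> idisjoint (I b) (Istar a)}" for a
  have "(\<Sum>a<n. v a (Istar a) powr \<rho>) \<le> 2 * (2 * \<alpha> * m) powr \<rho> * (\<Sum>a<n. v a (I a) powr \<rho>)"
    unfolding m_def
  proof (rule sum_powr_le_of_overlap_counts[OF n \<alpha> \<rho>, where k = k])
    show "v a (Istar a) \<le> \<alpha> * real (k a) * v a (I a)" if "a < n" for a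
      using approx_envy_free_le_card_overlapping[OF v[OF that] I ef \<alpha> that Istar_ci[OF that]]
      by (simp add: k_def)
    show "(\<Sum>a<n. k a) \<le> 2 * n"
      using sum_card_overlapping_le[of "{..<n}" "{..<n}" I Istar] I Istar
      by (simp add: k_def allocation_def)
  qed (auto simp: v approx_envy_free_proportional[OF _ I ef \<alpha>] valuation_nonneg valuation_le_1 Istar_ci)
  moreover have "(2 powr (1 / \<rho>) * (2 * \<alpha> * m)) powr \<rho> = 2 * (2 * \<alpha> * m) powr \<rho>"
    using \<rho> \<alpha> by (simp add: m_def powr_mult powr_powr)
  ultimately show ?thesis
    unfolding rho_mean_def m_def
    using powr_inverse_le_scaled[OF \<rho>, of "1 / real n" "2 powr (1 / \<rho>) * (2 * \<alpha> * m)"] \<alpha>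
    by (simp add: m_def mult_ac sum_nonneg)
qed

end
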